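(* Let $X=\{1,\dots,n\}$ with $n\ge2$, $Y$ a finite set, and $Q=(q(y,y'))$ a symmetric irreducible stochastic matrix on $Y$ with distinct eigenvalues $\lambda_0=1,\lambda_1,\dots,\lambda_m$ and eigenspaces $W_0,\dots,W_m$ (notation in context). Let $1\le h\le n-1$, $0<p_0<1$, and let $P=p_0M+(1-p_0)\frac{\Delta_h}{h(n-h)|Y|}$ be the second crested product on $L(\Theta_h)$. Let $\underline a=(a_0,\dots,a_m)$ be a type with $a_0+\cdots+a_m=h$ and let $k$ be an integer with $\ell(\underline a)\le k\le h$. Then every $F\in P_{h,\underline a,k}$ satisfies $PF=\mu F$ with $$\mu=p_0\cdot\frac1h\sum_{j=0}^ma_j\lambda_j+(1-p_0)\frac{(n+\ell(\underline a)-k-h)(h-k+1)-(n-h)}{h(n-h)}.$$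
   Context: $Q$ acts on $L(Y)$ by $(Qf)(y)=\sum_{y'}q(y,y')f(y')$; $W_0$ is the space of constant functions and $W_j$ the eigenspace of $\lambda_j$. For $0\le k\le n$, $\Theta_k$ is the set of functions $\theta$ with $\mathrm{dom}(\theta)$ a $k$-subset of $X$ and values in $Y$ ($\Theta_0$ = empty function); $\varphi\subseteq\theta$ means $\mathrm{dom}\varphi\subseteq\mathrm{dom}\theta$ and $\theta|_{\mathrm{dom}\varphi}=\varphi$. Operators on $L(\Theta_h)$: $(MF)(\theta)=\frac1h\sum_{j\in\mathrm{dom}\theta}\sum_{y\in Y}q(\theta(j),y)F(\theta_{j\to y})$, where $\theta_{j\to y}$ equals $\theta$ except that its value at $j$ is $y$; $(\Delta_hF)(\theta)=\sum F(\varphi)$ over all $\varphi\in\Theta_h$ with $|\mathrm{dom}\varphi\cap\mathrm{dom}\theta|=h-1$ and $\varphi=\theta$ on $\mathrm{dom}\varphi\cap\mathrm{dom}\theta$ (each row of $\Delta_h$ has $h(n-h)|Y|$ nonzero entries). For $1\le k\le n$: $D_k:L(\Theta_k)\to L(\Theta_{k-1})$, $(D_kF)(\varphi)=\sum_{\theta\in\Theta_k:\theta\supseteq\varphi}F(\theta)$, and $D_k^*:L(\Theta_{k-1})\to L(\Theta_k)$, $(D_k^*F)(\theta)=\sum_{\varphi\subseteq\theta}F(\varphi)$; $D_0:=0$. Types $\underline c=(c_0,\dots,c_m)$ of nonnegative integers, $|\underline c|=\sum c_i$, $\ell(\underline c)=c_1+\cdots+c_m$, $\underline c'=(c_0-1,c_1,\dots,c_m)$.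 A fundamental function of type $\underline c$ on $A\subseteq X$, $|A|=|\underline c|$, is $F=\bigotimes_{j\in A}F^j$ ($F(\theta)=\prod_{j\in A}F^j(\theta(j))$ if $\mathrm{dom}\theta=A$, $0$ otherwise) with each $F^j$ in some $W_{i_j}$ and exactly $c_i$ indices with $i_j=i$; $P_{k,\underline c,A}$ is their span, $P_{k,\underline c}=\bigoplus_{|A|=k}P_{k,\underline c,A}$ ($\{0\}$ if an entry is negative). $D_{k,\underline c}=D_k|_{P_{k,\underline c}}$, $D^*_{k,\underline c}=D^*_k|_{P_{k-1,\underline c'}}$. For $|\underline c|=k$: $P_{k,\underline c,k}=\ker D_{k,\underline c}$; for $k<h\le n$, $|\underline c|=h$, $\ell(\underline c)\le k$: $P_{h,\underline c,k}=D^*_{h,\underline c}(P_{h-1,\underline c',k})$. *)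

theory Defs
  imports "HOL-Analysis.Analysis"
begin

(* Ground set X = {1..n}; Y is a finite type 'y; functions theta : partial maps nat -> 'y *)

definition Qop :: "('y::finite \<Rightarrow> 'y \<Rightarrow> real) \<Rightarrow> ('y \<Rightarrow> real) \<Rightarrow> 'y \<Rightarrow> real" where
  "Qop q f y = (\<Sum>y'\<in>UNIV. q y y' * f y')"

definition stochastic_sym_irred :: "('y::finite \<Rightarrow> 'y \<Rightarrow> real) \<Rightarrow> bool" where
  "stochastic_sym_irred q \<longleftrightarrow>
     (\<forall>y y'. q y y' \<ge> 0) \<and> (\<forall>y. (\<Sum>y'\<in>UNIV. q y y') = 1) \<and>
     (\<forall>y y'. q y y' = q y' y) \<and>
     (\<forall>y y'. (y, y') \<in> {(a, b). q a b > 0}\<^sup>*)"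

definition Wsp :: "('y::finite \<Rightarrow> 'y \<Rightarrow> real) \<Rightarrow> (nat \<Rightarrow> real) \<Rightarrow> nat \<Rightarrow> ('y \<Rightarrow> real) set" where
  "Wsp q lam j = {f. Qop q f = (\<lambda>y. lam j * f y)}"

definition Theta :: "nat \<Rightarrow> nat \<Rightarrow> (nat \<Rightarrow> 'y option) set" where
  "Theta n k = {\<theta>. dom \<theta> \<subseteq> {1..n} \<and> card (dom \<theta>) = k}"

definition Mop :: "nat \<Rightarrow> nat \<Rightarrow> ('y::finite \<Rightarrow> 'y \<Rightarrow> real) \<Rightarrow>
    ((nat \<Rightarrow> 'y option) \<Rightarrow> real) \<Rightarrow> (nat \<Rightarrow> 'y option) \<Rightarrow> real" where
  "Mop n h q F \<theta> = (if \<theta> \<in> Theta n h then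
      (1 / real h) * (\<Sum>j\<in>dom \<theta>. \<Sum>y\<in>UNIV. q (the (\<theta> j)) y * F (\<theta>(j \<mapsto> y)))
    else 0)"

definition Deltaop :: "nat \<Rightarrow> nat \<Rightarrow> ((nat \<Rightarrow> 'y option) \<Rightarrow> real) \<Rightarrow> (nat \<Rightarrow> 'y option) \<Rightarrow> real" where
  "Deltaop n h F \<theta> = (if \<theta> \<in> Theta n h then
      (\<Sum>\<phi>\<in>{\<phi>\<in>Theta n h. card (dom \<phi> \<inter> dom \<theta>) = h - 1 \<and>
                     (\<forall>x\<in>dom \<phi> \<inter> dom \<theta>. \<phi> x = \<theta> x)}. F \<phi>)
    else 0)"

definition Pop :: "nat \<Rightarrow> nat \<Rightarrow> real \<Rightarrow> ('y::finite \<Rightarrow> 'y \<Rightarrow> real) \<Rightarrow>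
    ((nat \<Rightarrow> 'y option) \<Rightarrow> real) \<Rightarrow> (nat \<Rightarrow> 'y option) \<Rightarrow> real" where
  "Pop n h p0 q F \<theta> = p0 * Mop n h q F \<theta>
      + (1 - p0) * Deltaop n h F \<theta> / (real h * real (n - h) * real CARD('y))"

definition Dop :: "nat \<Rightarrow> nat \<Rightarrow> ((nat \<Rightarrow> 'y option) \<Rightarrow> real) \<Rightarrow> (nat \<Rightarrow> 'y option) \<Rightarrow> real" where
  "Dop n k F \<phi> = (if k = 0 then 0 else if \<phi> \<in> Theta n (k - 1) then
      (\<Sum>\<theta>\<in>{\<theta>\<in>Theta n k. \<phi> \<subseteq>\<^sub>m \<theta>}. F \<theta>) else 0)"

definition Dstar :: "nat \<Rightarrow> nat \<Rightarrow> ((nat \<Rightarrow> 'y option) \<Rightarrow> real) \<Rightarrow> (nat \<Rightarrow> 'y option) \<Rightarrow> real" where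
  "Dstar n k F \<theta> = (if \<theta> \<in> Theta n k then
      (\<Sum>\<phi>\<in>{\<phi>\<in>Theta n (k - 1). \<phi> \<subseteq>\<^sub>m \<theta>}. F \<phi>) else 0)"

definition lin_span :: "('a \<Rightarrow> real) set \<Rightarrow> ('a \<Rightarrow> real) set" where
  "lin_span G = {F. \<exists>S c. finite S \<and> S \<subseteq> G \<and> F = (\<lambda>x. \<Sum>g\<in>S. c g * g x)}"

(* types c = (c_0,...,c_m) represented as c :: nat => nat, entries at 0..m *)
definition type_size :: "nat \<Rightarrow> (nat \<Rightarrow> nat) \<Rightarrow> nat" where
  "type_size m c = (\<Sum>i\<le>m. c i)"

definition type_ell :: "nat \<Rightarrow> (nat \<Rightarrow> nat) \<Rightarrow> nat" where
  "type_ell m c = (\<Sum>i\<in>{1..m}. c i)"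

definition fundamental :: "('y::finite \<Rightarrow> 'y \<Rightarrow> real) \<Rightarrow> (nat \<Rightarrow> real) \<Rightarrow> nat \<Rightarrow> (nat \<Rightarrow> nat)
    \<Rightarrow> nat set \<Rightarrow> ((nat \<Rightarrow> 'y option) \<Rightarrow> real) set" where
  "fundamental q lam m c A = {F. \<exists>ix Fj.
      (\<forall>j\<in>A. ix j \<le> m \<and> Fj j \<in> Wsp q lam (ix j)) \<and>
      (\<forall>i\<le>m. card {j\<in>A. ix j = i} = c i) \<and>
      F = (\<lambda>\<theta>. if dom \<theta> = A then (\<Prod>j\<in>A. Fj j (the (\<theta> j))) else 0)}"

(* P_{k,c} = direct sum over k-subsets A of X of P_{k,c,A} = span of fundamental functions *)
definition Pkc :: "nat \<Rightarrow> ('y::finite \<Rightarrow> 'y \<Rightarrow> real) \<Rightarrow> (nat \<Rightarrow> real) \<Rightarrow> nat \<Rightarrow> nat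
    \<Rightarrow> (nat \<Rightarrow> nat) \<Rightarrow> ((nat \<Rightarrow> 'y option) \<Rightarrow> real) set" where
  "Pkc n q lam m k c = lin_span (\<Union>A\<in>{A. A \<subseteq> {1..n} \<and> card A = k}. fundamental q lam m c A)"

definition type_prime :: "(nat \<Rightarrow> nat) \<Rightarrow> nat \<Rightarrow> nat" where
  "type_prime c = c(0 := c 0 - 1)"

(* Pdiff d c k = P_{k+d, c, k}:
   P_{k,c,k} = ker D_{k,c};  P_{h,c,k} = D^*_{h,c}(P_{h-1,c',k}), with P = {0} if c_0 - 1 < 0 *)
fun Pdiff :: "nat \<Rightarrow> ('y::finite \<Rightarrow> 'y \<Rightarrow> real) \<Rightarrow> (nat \<Rightarrow> real) \<Rightarrow> nat \<Rightarrow> nat \<Rightarrow> nat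
    \<Rightarrow> (nat \<Rightarrow> nat) \<Rightarrow> ((nat \<Rightarrow> 'y option) \<Rightarrow> real) set" where
  "Pdiff n q lam m k 0 c = {F \<in> Pkc n q lam m k c. Dop n k F = (\<lambda>_. 0)}"
| "Pdiff n q lam m k (Suc d) c =
     Dstar n (k + Suc d) ` (if c 0 = 0 then {\<lambda>_. 0} else Pdiff n q lam m k d (type_prime c))"

definition Phck :: "nat \<Rightarrow> ('y::finite \<Rightarrow> 'y \<Rightarrow> real) \<Rightarrow> (nat \<Rightarrow> real) \<Rightarrow> nat \<Rightarrow> nat
    \<Rightarrow> (nat \<Rightarrow> nat) \<Rightarrow> nat \<Rightarrow> ((nat \<Rightarrow> 'y option) \<Rightarrow> real) set" where
  "Phck n q lam m h c k = Pdiff n q lam m k (h - k) c"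

end

theory Submission
  imports Defs
begin

(* Write J F theta for the sum of F over all ways of resampling one coordinate of theta, and
   K F theta for the sum over all ways of moving one coordinate of theta to a fresh position with a
   fresh value. On Theta_t one has D*_t D_t = J + K and D_{t+1} D*_{t+1} = (n - t)|Y| + K, and K is
   Delta_h on Theta_h. A function in W_0 is constant (irreducibility) and a function in W_i, i > 0,
   has zero sum (symmetry), so J acts on P_{t,c} as the scalar |Y| c_0; likewise h M acts on
   fundamental functions factorwise, as the scalar sum_i c_i lambda_i. Since D* maps P_{t,c'} into
   P_{t+1,c}, the two identities for D*D and DD* determine, by induction on h - k starting from
   ker D, the eigenvalue of K on P_{h,a,k}. *)

lemma finite_dom_Theta: "\<theta> \<in> Theta n t \<Longrightarrow> finite (dom \<theta>)"
  unfolding Theta_def by (auto intro: finite_subset)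

lemma Theta_delete: "\<theta> \<in> Theta n t \<Longrightarrow> j \<in> dom \<theta> \<Longrightarrow> \<theta>(j := None) \<in> Theta n (t - 1)"
  using finite_dom_Theta[of \<theta> n t] unfolding Theta_def by auto

lemma Theta_extend:
  "\<phi> \<in> Theta n s \<Longrightarrow> x \<in> {1..n} - dom \<phi> \<Longrightarrow> \<phi>(x \<mapsto> y) \<in> Theta n (Suc s)"
  using finite_dom_Theta[of \<phi> n s] unfolding Theta_def by auto

lemma map_le_card_dom_Suc:
  assumes "finite (dom \<theta>)" "\<phi> \<subseteq>\<^sub>m \<theta>" "card (dom \<theta>) = Suc (card (dom \<phi>))"
  obtains j where "j \<in> dom \<theta>" "\<phi> = \<theta>(j := None)"
proof -
  have sub: "dom \<phi> \<subseteq> dom \<theta>"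
    using assms(2) by (rule map_le_implies_dom_le)
  moreover have "dom \<phi> \<noteq> dom \<theta>"
    using assms(3) by auto
  ultimately obtain j where j: "j \<in> dom \<theta> - dom \<phi>"
    by blast
  then have "dom \<phi> \<subseteq> dom \<theta> - {j}" "card (dom \<theta> - {j}) = card (dom \<phi>)"
    using sub assms(1,3) by auto
  then have dom_eq: "dom \<phi> = dom \<theta> - {j}"
    using assms(1) by (simp add: card_subset_eq)
  have "\<phi> x = (\<theta>(j := None)) x" for x
  proof (cases "x \<in> dom \<phi>")
    case True
    then show ?thesis
      using assms(2) dom_eq by (auto simp: map_le_def)
  next
    case False
    then have "x \<notin> dom \<theta> - {j}"
      using dom_eq by simp
    with False show ?thesis
      by (auto simp: domIff)
  qed
  then have "\<phi> = \<theta>(j := None)" ..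
  with j that show thesis by blast
qed

lemma bij_betw_delete:
  assumes "\<theta> \<in> Theta n (Suc s)"
  shows "bij_betw (\<lambda>j. \<theta>(j := None)) (dom \<theta>) {\<phi> \<in> Theta n s. \<phi> \<subseteq>\<^sub>m \<theta>}"
proof (rule bij_betw_imageI)
  show "inj_on (\<lambda>j. \<theta>(j := None)) (dom \<theta>)"
    by (rule inj_onI) (metis domIff fun_upd_apply)
  show "(\<lambda>j. \<theta>(j := None)) ` dom \<theta> = {\<phi> \<in> Theta n s. \<phi> \<subseteq>\<^sub>m \<theta>}"
  proof (intro set_eqI iffI)
    fix \<phi> assume "\<phi> \<in> {\<phi> \<in> Theta n s. \<phi> \<subseteq>\<^sub>m \<theta>}"
    then show "\<phi> \<in> (\<lambda>j. \<theta>(j := None)) ` dom \<theta>"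
      using assms finite_dom_Theta[OF assms] unfolding Theta_def
      by (auto elim!: map_le_card_dom_Suc)
  qed (use Theta_delete[OF assms] in \<open>auto simp: map_le_def split: if_splits\<close>)
qed

lemma bij_betw_extend:
  assumes "\<phi> \<in> Theta n s"
  shows "bij_betw (\<lambda>(x, y). \<phi>(x \<mapsto> y)) (({1..n} - dom \<phi>) \<times> UNIV)
           {\<theta> \<in> Theta n (Suc s). \<phi> \<subseteq>\<^sub>m \<theta>}"
proof (rule bij_betw_imageI)
  show "inj_on (\<lambda>(x, y). \<phi>(x \<mapsto> y)) (({1..n} - dom \<phi>) \<times> UNIV)"
    by (rule inj_onI) (clarsimp, metis fun_upd_apply option.inject)
  show "(\<lambda>(x, y). \<phi>(x \<mapsto> y)) ` (({1..n} - dom \<phi>) \<times> UNIV) = {\<theta> \<in> Theta n (Suc s). \<phi> \<subseteq>\<^sub>m \<theta>}"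
  proof (intro set_eqI iffI)
    fix \<theta> assume \<theta>: "\<theta> \<in> {\<theta> \<in> Theta n (Suc s). \<phi> \<subseteq>\<^sub>m \<theta>}"
    moreover have "finite (dom \<theta>)"
      using \<theta> finite_dom_Theta by blast
    ultimately obtain x where x: "x \<in> dom \<theta>" "\<phi> = \<theta>(x := None)"
      using assms unfolding Theta_def by (auto elim!: map_le_card_dom_Suc)
    then have "\<theta> = \<phi>(x \<mapsto> the (\<theta> x))"
      by (auto simp: domIff)
    moreover have "x \<in> {1..n} - dom \<phi>"
      using \<theta> x unfolding Theta_def by auto
    ultimately show "\<theta> \<in> (\<lambda>(x, y). \<phi>(x \<mapsto> y)) ` (({1..n} - dom \<phi>) \<times> UNIV)"
      by (intro rev_image_eqI[of "(x, the (\<theta> x))"]) auto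
  qed (auto simp: map_le_def intro: Theta_extend[OF assms])
qed

lemma inj_on_relocate: "inj_on (\<lambda>(j, x, y). (\<theta>(j := None))(x \<mapsto> y)) (dom \<theta> \<times> (X - dom \<theta>) \<times> UNIV)"
proof (rule inj_onI)
  fix p p' assume p: "p \<in> dom \<theta> \<times> (X - dom \<theta>) \<times> UNIV" and p': "p' \<in> dom \<theta> \<times> (X - dom \<theta>) \<times> UNIV"
    and eq: "(\<lambda>(j, x, y). (\<theta>(j := None))(x \<mapsto> y)) p = (\<lambda>(j, x, y). (\<theta>(j := None))(x \<mapsto> y)) p'"
  obtain j x y j' x' y' where pp: "p = (j, x, y)" "p' = (j', x', y')"
    by (cases p, cases p') auto
  have j: "j \<in> dom \<theta>" "j' \<in> dom \<theta>" and x: "x \<notin> dom \<theta>" "x' \<notin> dom \<theta>"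
    and eq: "(\<theta>(j := None))(x \<mapsto> y) = (\<theta>(j' := None))(x' \<mapsto> y')"
    using p p' eq unfolding pp by auto
  have "Some y = ((\<theta>(j' := None))(x' \<mapsto> y')) x"
    by (simp flip: eq)
  then have xy: "x = x' \<and> y = y'"
    using x by (auto simp: domIff split: if_splits)
  have "None = ((\<theta>(j' := None))(x' \<mapsto> y')) j"
    using j x by (auto simp flip: eq)
  then have "j = j'"
    using j xy x by (auto simp: domIff split: if_splits)
  with xy show "p = p'"
    unfolding pp by simp
qed

lemma Theta_neighbourE:
  assumes \<theta>: "\<theta> \<in> Theta n h" and \<phi>: "\<phi> \<in> Theta n h" and h: "h \<ge> 1"
    and card_common: "card (dom \<phi> \<inter> dom \<theta>) = h - 1"
    and agree: "\<forall>x\<in>dom \<phi> \<inter> dom \<theta>. \<phi> x = \<theta> x"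
  obtains j x where "j \<in> dom \<theta>" "x \<in> {1..n} - dom \<theta>" "\<phi> = (\<theta>(j := None))(x \<mapsto> the (\<phi> x))"
proof -
  \<comment> \<open>The common part \<open>\<psi>\<close> of \<open>\<theta>\<close> and \<open>\<phi>\<close> arises from each of them by deleting one coordinate.\<close>
  define \<psi> where "\<psi> = \<theta> |` (dom \<phi> \<inter> dom \<theta>)"
  have dom_\<psi>: "dom \<psi> = dom \<phi> \<inter> dom \<theta>"
    unfolding \<psi>_def by auto
  have card_\<psi>: "card (dom \<psi>) = h - 1"
    using card_common dom_\<psi> by simp
  have "\<psi> \<subseteq>\<^sub>m \<theta>"
    unfolding \<psi>_def map_le_def by (auto simp: restrict_map_def split: if_splits)
  moreover have "card (dom \<theta>) = Suc (card (dom \<psi>))"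
    using \<theta> h card_\<psi> unfolding Theta_def by simp
  ultimately obtain j where j: "j \<in> dom \<theta>" "\<psi> = \<theta>(j := None)"
    by (rule map_le_card_dom_Suc[OF finite_dom_Theta[OF \<theta>]])
  have "\<psi> \<subseteq>\<^sub>m \<phi>"
    using agree unfolding \<psi>_def map_le_def by (auto simp: restrict_map_def split: if_splits)
  moreover have "card (dom \<phi>) = Suc (card (dom \<psi>))"
    using \<phi> h card_\<psi> unfolding Theta_def by simp
  ultimately obtain x where x: "x \<in> dom \<phi>" "\<psi> = \<phi>(x := None)"
    by (rule map_le_card_dom_Suc[OF finite_dom_Theta[OF \<phi>]])
  have "\<phi> = \<psi>(x \<mapsto> the (\<phi> x))"
    unfolding x(2) using x(1) by (auto simp: fun_eq_iff domIff)
  then have "\<phi> = (\<theta>(j := None))(x \<mapsto> the (\<phi> x))"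
    unfolding j(2) .
  moreover have "x \<in> {1..n} - dom \<theta>"
    using x \<phi> dom_\<psi> unfolding Theta_def by (auto simp: domIff)
  ultimately show thesis
    using j(1) that by blast
qed

lemma bij_betw_relocate:
  assumes \<theta>: "\<theta> \<in> Theta n h" and h: "h \<ge> 1"
  shows "bij_betw (\<lambda>(j, x, y). (\<theta>(j := None))(x \<mapsto> y)) (dom \<theta> \<times> ({1..n} - dom \<theta>) \<times> UNIV)
     {\<phi> \<in> Theta n h. card (dom \<phi> \<inter> dom \<theta>) = h - 1 \<and> (\<forall>x\<in>dom \<phi> \<inter> dom \<theta>. \<phi> x = \<theta> x)}"
proof (rule bij_betw_imageI[OF inj_on_relocate], intro set_eqI iffI)
  fix \<phi> assume "\<phi> \<in> (\<lambda>(j, x, y). (\<theta>(j := None))(x \<mapsto> y)) ` (dom \<theta> \<times> ({1..n} - dom \<theta>) \<times> UNIV)"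
  then obtain j x y where j: "j \<in> dom \<theta>" and x: "x \<in> {1..n} - dom \<theta>"
    and \<phi>: "\<phi> = (\<theta>(j := None))(x \<mapsto> y)"
    unfolding image_iff Bex_def split_paired_Ex prod.case mem_Sigma_iff by blast
  have "x \<in> {1..n} - dom (\<theta>(j := None))"
    using x by auto
  then have "\<phi> \<in> Theta n h"
    unfolding \<phi> using Theta_extend[OF Theta_delete[OF \<theta> j]] h by simp
  moreover have common: "dom \<phi> \<inter> dom \<theta> = dom \<theta> - {j}"
    using \<phi> x by auto
  moreover have "card (dom \<theta> - {j}) = h - 1"
    using \<theta> j finite_dom_Theta[OF \<theta>] unfolding Theta_def by simp
  moreover have "\<forall>z\<in>dom \<phi> \<inter> dom \<theta>. \<phi> z = \<theta> z"
    unfolding common using \<phi> x by auto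
  ultimately show "\<phi> \<in> {\<phi> \<in> Theta n h. card (dom \<phi> \<inter> dom \<theta>) = h - 1 \<and> (\<forall>x\<in>dom \<phi> \<inter> dom \<theta>. \<phi> x = \<theta> x)}"
    by simp
next
  fix \<phi> assume "\<phi> \<in> {\<phi> \<in> Theta n h. card (dom \<phi> \<inter> dom \<theta>) = h - 1 \<and> (\<forall>x\<in>dom \<phi> \<inter> dom \<theta>. \<phi> x = \<theta> x)}"
  then have \<phi>: "\<phi> \<in> Theta n h" "card (dom \<phi> \<inter> dom \<theta>) = h - 1" "\<forall>x\<in>dom \<phi> \<inter> dom \<theta>. \<phi> x = \<theta> x"
    by auto
  obtain j x where "j \<in> dom \<theta>" "x \<in> {1..n} - dom \<theta>" "\<phi> = (\<theta>(j := None))(x \<mapsto> the (\<phi> x))"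
    by (rule Theta_neighbourE[OF \<theta> \<phi>(1) h \<phi>(2,3)])
  then show "\<phi> \<in> (\<lambda>(j, x, y). (\<theta>(j := None))(x \<mapsto> y)) ` (dom \<theta> \<times> ({1..n} - dom \<theta>) \<times> UNIV)"
    by (intro rev_image_eqI[of "(j, x, the (\<phi> x))"]) auto
qed

(* With r = q this is h M on Theta_h; with the all-ones matrix it is the operator J. *)
definition markov_sum :: "('y::finite \<Rightarrow> 'y \<Rightarrow> real) \<Rightarrow> ((nat \<Rightarrow> 'y option) \<Rightarrow> real) \<Rightarrow> (nat \<Rightarrow> 'y option) \<Rightarrow> real"
  where "markov_sum r F \<theta> = (\<Sum>j\<in>dom \<theta>. \<Sum>y\<in>UNIV. r (the (\<theta> j)) y * F (\<theta>(j \<mapsto> y)))"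

(* The operator K; unlike Deltaop it is not restricted to a fixed level Theta_h. *)
definition relocate_sum :: "nat \<Rightarrow> ((nat \<Rightarrow> 'y::finite option) \<Rightarrow> real) \<Rightarrow> (nat \<Rightarrow> 'y option) \<Rightarrow> real"
  where "relocate_sum n F \<theta> = (\<Sum>j\<in>dom \<theta>. \<Sum>x\<in>{1..n} - dom \<theta>. \<Sum>y\<in>UNIV. F ((\<theta>(j := None))(x \<mapsto> y)))"

lemma Dstar_Suc_eq:
  assumes "\<theta> \<in> Theta n (Suc s)"
  shows "Dstar n (Suc s) G \<theta> = (\<Sum>j\<in>dom \<theta>. G (\<theta>(j := None)))"
  using assms sum.reindex_bij_betw[OF bij_betw_delete[OF assms], of G] by (simp add: Dstar_def)

lemma Dop_Suc_eq:
  assumes "\<phi> \<in> Theta n s"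
  shows "Dop n (Suc s) F \<phi> = (\<Sum>x\<in>{1..n} - dom \<phi>. \<Sum>y\<in>UNIV. F (\<phi>(x \<mapsto> y)))"
  using assms sum.reindex_bij_betw[OF bij_betw_extend[OF assms], of F]
  by (simp add: Dop_def sum.cartesian_product case_prod_unfold)

lemma Deltaop_eq_relocate_sum:
  assumes "\<theta> \<in> Theta n h" "h \<ge> 1"
  shows "Deltaop n h F \<theta> = relocate_sum n F \<theta>"
  using assms sum.reindex_bij_betw[OF bij_betw_relocate[OF assms], of F]
  by (simp add: Deltaop_def relocate_sum_def sum.cartesian_product case_prod_unfold)

lemma Dstar_0: "Dstar n t (\<lambda>_. 0) = (\<lambda>_. 0)"
  by (simp add: Dstar_def fun_eq_iff)

lemma Dstar_lincomb:
  "Dstar n t (\<lambda>x. \<Sum>g\<in>S. c g * g x) = (\<lambda>\<theta>. \<Sum>g\<in>S. c g * Dstar n t g \<theta>)"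
proof
  fix \<theta>
  show "Dstar n t (\<lambda>x. \<Sum>g\<in>S. c g * g x) \<theta> = (\<Sum>g\<in>S. c g * Dstar n t g \<theta>)"
    by (cases "\<theta> \<in> Theta n t") (simp_all add: Dstar_def sum_distrib_left sum.swap[where A = S])
qed

lemma Dstar_Suc_scale:
  assumes "\<forall>\<phi>\<in>Theta n s. H \<phi> = r * G \<phi>"
  shows "Dstar n (Suc s) H \<theta> = r * Dstar n (Suc s) G \<theta>"
  using assms by (auto simp: Dstar_def sum_distrib_left intro!: sum.cong)

lemma markov_sum_lincomb:
  "markov_sum r (\<lambda>x. \<Sum>g\<in>S. c g * g x) \<theta> = (\<Sum>g\<in>S. c g * markov_sum r g \<theta>)"
  unfolding markov_sum_def sum_distrib_left
  by (subst sum.swap, rule sum.cong[OF refl], subst sum.swap) (simp add: algebra_simps)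

lemma Dstar_Dop_eq:
  assumes \<theta>: "\<theta> \<in> Theta n t"
  shows "Dstar n t (Dop n t F) \<theta> = markov_sum (\<lambda>_ _. 1) F \<theta> + relocate_sum n F \<theta>"
proof (cases t)
  case 0
  with \<theta> have "dom \<theta> = {}"
    using finite_dom_Theta[OF \<theta>] unfolding Theta_def by auto
  with 0 show ?thesis
    by (simp add: Dstar_def Dop_def markov_sum_def relocate_sum_def)
next
  case (Suc s)
  have "Dop n (Suc s) F (\<theta>(j := None)) = (\<Sum>y\<in>UNIV. F (\<theta>(j \<mapsto> y)))
      + (\<Sum>x\<in>{1..n} - dom \<theta>. \<Sum>y\<in>UNIV. F ((\<theta>(j := None))(x \<mapsto> y)))"
    if j: "j \<in> dom \<theta>" for j
  proof -
    have "j \<in> {1..n}"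
      using \<theta> j unfolding Theta_def by auto
    then have "{1..n} - dom (\<theta>(j := None)) = insert j ({1..n} - dom \<theta>)"
      using j by auto
    then show ?thesis
      using Theta_delete[OF \<theta> j] j Suc by (simp add: Dop_Suc_eq)
  qed
  then show ?thesis
    using \<theta> Suc by (simp add: Dstar_Suc_eq markov_sum_def relocate_sum_def sum.distrib)
qed

lemma Dop_Dstar_eq:
  fixes G :: "(nat \<Rightarrow> 'y::finite option) \<Rightarrow> real"
  assumes \<phi>: "\<phi> \<in> Theta n s"
  shows "Dop n (Suc s) (Dstar n (Suc s) G) \<phi> = real (n - s) * real CARD('y) * G \<phi> + relocate_sum n G \<phi>"
proof -
  have fin: "finite (dom \<phi>)"
    using \<phi> by (rule finite_dom_Theta)
  have "Dstar n (Suc s) G (\<phi>(x \<mapsto> y)) = G \<phi> + (\<Sum>j\<in>dom \<phi>. G ((\<phi>(j := None))(x \<mapsto> y)))"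
    if x: "x \<in> {1..n} - dom \<phi>" for x y
  proof -
    have "Dstar n (Suc s) G (\<phi>(x \<mapsto> y)) = (\<Sum>j\<in>insert x (dom \<phi>). G ((\<phi>(x \<mapsto> y))(j := None)))"
      using Dstar_Suc_eq[OF Theta_extend[OF \<phi> x]] by simp
    also have "\<dots> = G ((\<phi>(x \<mapsto> y))(x := None)) + (\<Sum>j\<in>dom \<phi>. G ((\<phi>(x \<mapsto> y))(j := None)))"
      using x fin by simp
    also have "(\<phi>(x \<mapsto> y))(x := None) = \<phi>"
      using x by (auto simp: domIff)
    also have "(\<Sum>j\<in>dom \<phi>. G ((\<phi>(x \<mapsto> y))(j := None))) = (\<Sum>j\<in>dom \<phi>. G ((\<phi>(j := None))(x \<mapsto> y)))"
    proof (rule sum.cong[OF refl])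
      fix j assume "j \<in> dom \<phi>"
      with x have "j \<noteq> x"
        by auto
      then show "G ((\<phi>(x \<mapsto> y))(j := None)) = G ((\<phi>(j := None))(x \<mapsto> y))"
        by (simp add: fun_upd_twist)
    qed
    finally show ?thesis .
  qed
  then have "Dop n (Suc s) (Dstar n (Suc s) G) \<phi>
      = real (card ({1..n} - dom \<phi>)) * real CARD('y) * G \<phi>
        + (\<Sum>x\<in>{1..n} - dom \<phi>. \<Sum>y\<in>UNIV. \<Sum>j\<in>dom \<phi>. G ((\<phi>(j := None))(x \<mapsto> y)))"
    by (simp add: Dop_Suc_eq[OF \<phi>] sum.distrib)
  also have "card ({1..n} - dom \<phi>) = n - s"
    using \<phi> fin unfolding Theta_def by (simp add: card_Diff_subset)
  also have "(\<Sum>x\<in>{1..n} - dom \<phi>. \<Sum>y\<in>UNIV. \<Sum>j\<in>dom \<phi>. G ((\<phi>(j := None))(x \<mapsto> y))) = relocate_sum n G \<phi>"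
    unfolding relocate_sum_def
    by (subst sum.swap, subst sum.swap[where A = "{1..n} - dom \<phi>" and B = "dom \<phi>"]) simp
  finally show ?thesis .
qed

lemma sum_eigenfunction_eq_0:
  fixes q :: "'y::finite \<Rightarrow> 'y \<Rightarrow> real"
  assumes q: "stochastic_sym_irred q" and f: "Qop q f = (\<lambda>y. \<mu> * f y)" and "\<mu> \<noteq> 1"
  shows "(\<Sum>y\<in>UNIV. f y) = 0"
proof -
  have rows: "(\<Sum>y'\<in>UNIV. q y y') = 1" and sym: "q y y' = q y' y" for y y'
    using q unfolding stochastic_sym_irred_def by auto
  have columns: "(\<Sum>y\<in>UNIV. q y y') = 1" for y'
    using rows[of y'] by (metis (no_types) sum.cong sym)
  have "\<mu> * (\<Sum>y\<in>UNIV. f y) = (\<Sum>y\<in>UNIV. Qop q f y)"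
    by (simp add: f sum_distrib_left)
  also have "\<dots> = (\<Sum>y'\<in>UNIV. (\<Sum>y\<in>UNIV. q y y') * f y')"
    unfolding Qop_def sum_distrib_right by (rule sum.swap)
  also have "\<dots> = (\<Sum>y\<in>UNIV. f y)"
    by (simp add: columns)
  finally have "(\<mu> - 1) * (\<Sum>y\<in>UNIV. f y) = 0"
    by (simp add: algebra_simps)
  with \<open>\<mu> \<noteq> 1\<close> show ?thesis
    by simp
qed

lemma harmonic_const:
  fixes q :: "'y::finite \<Rightarrow> 'y \<Rightarrow> real"
  assumes q: "stochastic_sym_irred q" and f: "Qop q f = f"
  shows "f y = f y'"
proof -
  have rows: "(\<Sum>z\<in>UNIV. q y z) = 1" and nonneg: "q y z \<ge> 0"
    and irred: "(y, z) \<in> {(a, b). q a b > 0}\<^sup>*" for y z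
    using q unfolding stochastic_sym_irred_def by auto
  define M where "M = Max (range f)"
  have le_M: "f z \<le> M" for z
    unfolding M_def by simp
  have "M \<in> range f"
    unfolding M_def by (rule Max_in) auto
  then obtain y0 where y0: "f y0 = M"
    by auto
  have step: "f b = M" if "f a = M" "q a b > 0" for a b
  proof -
    have "(\<Sum>z\<in>UNIV. q a z * (M - f z)) = M * (\<Sum>z\<in>UNIV. q a z) - Qop q f a"
      unfolding Qop_def by (simp add: algebra_simps sum_subtractf sum_distrib_left)
    also have "\<dots> = 0"
      using rows f that(1) by simp
    finally have "q a b * (M - f b) = 0"
      using sum_nonneg_eq_0_iff[of UNIV "\<lambda>z. q a z * (M - f z)"] nonneg le_M by simp
    then show ?thesis
      using that(2) by simp
  qed
  have "f z = M" for z
    using irred[of y0 z] by induction (use y0 step in auto)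
  then show ?thesis
    by simp
qed

lemma const_in_Wsp_0:
  assumes "stochastic_sym_irred q" "lam 0 = 1"
  shows "(\<lambda>_. 1) \<in> Wsp q lam 0"
  using assms unfolding Wsp_def Qop_def stochastic_sym_irred_def by auto

lemma Qop_all_ones_Wsp:
  fixes q :: "'y::finite \<Rightarrow> 'y \<Rightarrow> real"
  assumes q: "stochastic_sym_irred q" and lam0: "lam 0 = 1" and inj: "inj_on lam {0..m}"
    and i: "i \<le> m" and f: "f \<in> Wsp q lam i"
  shows "Qop (\<lambda>_ _. 1) f = (\<lambda>y. (if i = 0 then real CARD('y) else 0) * f y)"
proof (cases "i = 0")
  case True
  then have "Qop q f = f"
    using f lam0 unfolding Wsp_def by simp
  then have const: "f y' = f y" for y y'
    by (rule harmonic_const[OF q])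
  have "(\<Sum>y'\<in>UNIV. f y') = real CARD('y) * f y" for y
    using sum.cong[of UNIV UNIV f "\<lambda>_. f y"] const by simp
  with True show ?thesis
    by (simp add: Qop_def fun_eq_iff)
next
  case False
  then have "lam i \<noteq> 1"
    using inj i lam0 unfolding inj_on_def by (metis atLeastAtMost_iff le0)
  then have "(\<Sum>y\<in>UNIV. f y) = 0"
    using q f unfolding Wsp_def by (blast intro: sum_eigenfunction_eq_0)
  with False show ?thesis
    by (simp add: Qop_def fun_eq_iff)
qed

lemma lin_span_0: "(\<lambda>_. 0) \<in> lin_span G"
  unfolding lin_span_def by (rule CollectI, rule exI[of _ "{}"]) auto

lemma lin_span_base: "g \<in> G \<Longrightarrow> g \<in> lin_span G"
  unfolding lin_span_def by (rule CollectI, rule exI[of _ "{g}"], rule exI[of _ "\<lambda>_. 1"]) auto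

lemma lin_span_scale: "F \<in> lin_span G \<Longrightarrow> (\<lambda>x. r * F x) \<in> lin_span G"
  unfolding lin_span_def by (auto simp: sum_distrib_left mult.assoc intro!: exI[of _ "\<lambda>g. r * _ g"])

lemma lin_span_add:
  assumes "F1 \<in> lin_span G" "F2 \<in> lin_span G"
  shows "(\<lambda>x. F1 x + F2 x) \<in> lin_span G"
proof -
  obtain S1 c1 S2 c2 where S: "finite S1" "S1 \<subseteq> G" "F1 = (\<lambda>x. \<Sum>g\<in>S1. c1 g * g x)"
    "finite S2" "S2 \<subseteq> G" "F2 = (\<lambda>x. \<Sum>g\<in>S2. c2 g * g x)"
    using assms unfolding lin_span_def by blast
  define c where "c g = (if g \<in> S1 then c1 g else 0) + (if g \<in> S2 then c2 g else 0)" for g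
  have "(\<Sum>g\<in>S1 \<union> S2. c g * g x)
      = (\<Sum>g\<in>S1 \<union> S2. if g \<in> S1 then c1 g * g x else 0) + (\<Sum>g\<in>S1 \<union> S2. if g \<in> S2 then c2 g * g x else 0)"
    for x unfolding sum.distrib[symmetric] c_def by (intro sum.cong refl) (simp add: distrib_right)
  also have "\<dots> x = F1 x + F2 x" for x
    using S by (simp add: sum.inter_restrict[symmetric] Int_absorb1 Int_absorb2)
  finally have "F1 x + F2 x = (\<Sum>g\<in>S1 \<union> S2. c g * g x)" for x
    by simp
  with S show ?thesis
    unfolding lin_span_def by (intro CollectI exI[of _ "S1 \<union> S2"] exI[of _ c]) auto
qed

lemma lin_span_sum:
  assumes "finite I" "\<forall>i\<in>I. f i \<in> lin_span G"
  shows "(\<lambda>x. \<Sum>i\<in>I. c i * f i x) \<in> lin_span G"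
  using assms by (induction I rule: finite_induct) (auto intro: lin_span_0 lin_span_add lin_span_scale)

lemma lin_span_eigen:
  assumes T: "\<And>S c. finite S \<Longrightarrow> T (\<lambda>x. \<Sum>g\<in>S. c g * g x) \<theta> = (\<Sum>g\<in>S. c g * T g \<theta>)"
    and eigen: "\<And>g. g \<in> G \<Longrightarrow> T g \<theta> = \<mu> * g \<theta>" and F: "F \<in> lin_span G"
  shows "T F \<theta> = \<mu> * F \<theta>"
proof -
  obtain S c where S: "finite S" "S \<subseteq> G" "F = (\<lambda>x. \<Sum>g\<in>S. c g * g x)"
    using F unfolding lin_span_def by blast
  have "T F \<theta> = (\<Sum>g\<in>S. c g * T g \<theta>)"
    unfolding S(3) by (rule T[OF S(1)])
  also have "\<dots> = (\<Sum>g\<in>S. c g * (\<mu> * g \<theta>))"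
    using S(2) eigen by (intro sum.cong refl) auto
  also have "\<dots> = \<mu> * F \<theta>"
    unfolding S(3) by (simp add: sum_distrib_left mult.left_commute)
  finally show ?thesis .
qed

lemma lin_span_image:
  assumes T: "\<And>S c. finite S \<Longrightarrow> T (\<lambda>x. \<Sum>g\<in>S. c g * g x) = (\<lambda>\<theta>. \<Sum>g\<in>S. c g * T g \<theta>)"
    and image: "\<And>g. g \<in> G \<Longrightarrow> T g \<in> lin_span H" and F: "F \<in> lin_span G"
  shows "T F \<in> lin_span H"
proof -
  obtain S c where S: "finite S" "S \<subseteq> G" "F = (\<lambda>x. \<Sum>g\<in>S. c g * g x)"
    using F unfolding lin_span_def by blast
  then show ?thesis
    using T[OF S(1)] lin_span_sum[OF S(1), of T H c] image by auto
qed

definition tensor :: "nat set \<Rightarrow> (nat \<Rightarrow> 'y \<Rightarrow> real) \<Rightarrow> (nat \<Rightarrow> 'y option) \<Rightarrow> real"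
  where "tensor A Fj \<theta> = (if dom \<theta> = A then \<Prod>j\<in>A. Fj j (the (\<theta> j)) else 0)"

lemma fundamentalE:
  assumes "g \<in> fundamental q lam m c A"
  obtains ix Fj where "\<forall>j\<in>A. ix j \<le> m \<and> Fj j \<in> Wsp q lam (ix j)"
    "\<forall>i\<le>m. card {j\<in>A. ix j = i} = c i" "g = tensor A Fj"
  using assms unfolding fundamental_def tensor_def by blast

lemma markov_sum_tensor:
  fixes r :: "'y::finite \<Rightarrow> 'y \<Rightarrow> real"
  assumes A: "finite A" and eigen: "\<And>j. j \<in> A \<Longrightarrow> Qop r (Fj j) = (\<lambda>y. \<nu> j * Fj j y)"
  shows "markov_sum r (tensor A Fj) \<theta> = (\<Sum>j\<in>A. \<nu> j) * tensor A Fj \<theta>"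
proof (cases "dom \<theta> = A")
  case False
  then show ?thesis
    by (simp add: markov_sum_def tensor_def insert_absorb domI)
next
  case True
  define rest where "rest j = (\<Prod>i\<in>A - {j}. Fj i (the (\<theta> i)))" for j
  have split: "(\<Prod>i\<in>A. G i) = G j * (\<Prod>i\<in>A - {j}. G i)" if "j \<in> A" for G :: "nat \<Rightarrow> real" and j
    using A that by (rule prod.remove)
  have "(\<Sum>y\<in>UNIV. r (the (\<theta> j)) y * tensor A Fj (\<theta>(j \<mapsto> y))) = \<nu> j * tensor A Fj \<theta>"
    if j: "j \<in> A" for j
  proof -
    have "tensor A Fj (\<theta>(j \<mapsto> y)) = Fj j y * rest j" for y
    proof -
      have "(\<Prod>i\<in>A - {j}. Fj i (the ((\<theta>(j \<mapsto> y)) i))) = rest j"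
        unfolding rest_def by (rule prod.cong) auto
      then show ?thesis
        using True j by (simp add: tensor_def split[OF j] insert_absorb domI)
    qed
    then have "(\<Sum>y\<in>UNIV. r (the (\<theta> j)) y * tensor A Fj (\<theta>(j \<mapsto> y)))
        = (\<Sum>y\<in>UNIV. r (the (\<theta> j)) y * Fj j y) * rest j"
      by (simp add: sum_distrib_right mult.assoc)
    also have "\<dots> = Qop r (Fj j) (the (\<theta> j)) * rest j"
      by (simp add: Qop_def)
    also have "\<dots> = \<nu> j * Fj j (the (\<theta> j)) * rest j"
      by (simp add: eigen[OF j])
    also have "\<dots> = \<nu> j * tensor A Fj \<theta>"
      using True by (simp add: tensor_def split[OF j] rest_def)
    finally show ?thesis .
  qed
  then show ?thesis
    using True by (simp add: markov_sum_def sum_distrib_right)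
qed

lemma sum_by_type:
  fixes ix :: "'a \<Rightarrow> nat" and c :: "nat \<Rightarrow> nat" and w :: "nat \<Rightarrow> real"
  assumes "finite A" "\<forall>j\<in>A. ix j \<le> m" "\<forall>i\<le>m. card {j\<in>A. ix j = i} = c i"
  shows "(\<Sum>j\<in>A. w (ix j)) = (\<Sum>i\<le>m. real (c i) * w i)"
proof -
  have "(\<Sum>j\<in>A. w (ix j)) = (\<Sum>i\<le>m. \<Sum>j\<in>{j\<in>A. ix j = i}. w (ix j))"
    using assms(1,2) by (intro sum.group[symmetric]) auto
  also have "\<dots> = (\<Sum>i\<le>m. real (c i) * w i)"
    using assms(3) by (intro sum.cong refl) simp
  finally show ?thesis .
qed

lemma markov_sum_fundamental:
  fixes r :: "'y::finite \<Rightarrow> 'y \<Rightarrow> real"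
  assumes g: "g \<in> fundamental q lam m c A" and A: "finite A"
    and eigen: "\<And>i f. i \<le> m \<Longrightarrow> f \<in> Wsp q lam i \<Longrightarrow> Qop r f = (\<lambda>y. w i * f y)"
  shows "markov_sum r g \<theta> = (\<Sum>i\<le>m. real (c i) * w i) * g \<theta>"
proof -
  obtain ix Fj where ix: "\<forall>j\<in>A. ix j \<le> m \<and> Fj j \<in> Wsp q lam (ix j)"
    and count: "\<forall>i\<le>m. card {j\<in>A. ix j = i} = c i" and g_eq: "g = tensor A Fj"
    using g by (rule fundamentalE)
  have "markov_sum r g \<theta> = (\<Sum>j\<in>A. w (ix j)) * g \<theta>"
    unfolding g_eq using A ix eigen by (intro markov_sum_tensor) auto
  also have "(\<Sum>j\<in>A. w (ix j)) = (\<Sum>i\<le>m. real (c i) * w i)"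
    using A ix count by (intro sum_by_type) auto
  finally show ?thesis .
qed

lemma markov_sum_Pkc:
  fixes r :: "'y::finite \<Rightarrow> 'y \<Rightarrow> real"
  assumes F: "F \<in> Pkc n q lam m t c"
    and eigen: "\<And>i f. i \<le> m \<Longrightarrow> f \<in> Wsp q lam i \<Longrightarrow> Qop r f = (\<lambda>y. w i * f y)"
  shows "markov_sum r F \<theta> = (\<Sum>i\<le>m. real (c i) * w i) * F \<theta>"
  using F unfolding Pkc_def
proof (rule lin_span_eigen[rotated 2])
  fix g assume "g \<in> (\<Union>A\<in>{A. A \<subseteq> {1..n} \<and> card A = t}. fundamental q lam m c A)"
  then obtain A where "A \<subseteq> {1..n}" "g \<in> fundamental q lam m c A"
    by blast
  then show "markov_sum r g \<theta> = (\<Sum>i\<le>m. real (c i) * w i) * g \<theta>"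
    using eigen by (intro markov_sum_fundamental) (auto intro: finite_subset)
qed (rule markov_sum_lincomb)

lemma Dstar_tensor:
  assumes A: "A \<subseteq> {1..n}" "card A = s"
  shows "Dstar n (Suc s) (tensor A Fj) \<theta> = (\<Sum>x\<in>{1..n} - A. tensor (insert x A) (Fj(x := \<lambda>_. 1)) \<theta>)"
proof -
  have finA: "finite A"
    using A(1) by (rule finite_subset) simp
  define P where "P = (\<Prod>i\<in>A. Fj i (the (\<theta> i)))"
  have "tensor (insert x A) (Fj(x := \<lambda>_. 1)) \<theta> = (if dom \<theta> = insert x A then P else 0)" if "x \<notin> A" for x
    using that finA unfolding tensor_def P_def by (auto intro!: prod.cong)
  then have rhs: "(\<Sum>x\<in>{1..n} - A. tensor (insert x A) (Fj(x := \<lambda>_. 1)) \<theta>)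
      = real (card {x\<in>{1..n} - A. dom \<theta> = insert x A}) * P"
    by (simp add: sum.inter_filter[symmetric])
  show ?thesis
  proof (cases "\<theta> \<in> Theta n (Suc s)")
    case False
    have "dom \<theta> \<noteq> insert x A" if "x \<in> {1..n} - A" for x
    proof
      assume "dom \<theta> = insert x A"
      then have "\<theta> \<in> Theta n (Suc s)"
        using A finA that unfolding Theta_def by simp
      with False show False ..
    qed
    then have "{x\<in>{1..n} - A. dom \<theta> = insert x A} = {}"
      by blast
    with False show ?thesis
      using rhs by (simp add: Dstar_def)
  next
    case True
    have "tensor A Fj (\<theta>(j := None)) = (if dom \<theta> - {j} = A then P else 0)" for j
      unfolding tensor_def P_def by (auto intro!: prod.cong)
    then have "Dstar n (Suc s) (tensor A Fj) \<theta> = real (card {j\<in>dom \<theta>. dom \<theta> - {j} = A}) * P"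
      using True finite_dom_Theta[OF True] by (simp add: Dstar_Suc_eq sum.inter_filter[symmetric])
    also have "{j\<in>dom \<theta>. dom \<theta> - {j} = A} = {x\<in>{1..n} - A. dom \<theta> = insert x A}"
      using True unfolding Theta_def by auto
    finally show ?thesis
      using rhs by simp
  qed
qed

lemma fundamental_insert:
  assumes ix: "\<forall>j\<in>A. ix j \<le> m \<and> Fj j \<in> Wsp q lam (ix j)"
    and count: "\<forall>i\<le>m. card {j\<in>A. ix j = i} = type_prime c i" and c0: "c 0 > 0"
    and A: "finite A" "x \<notin> A" and W0: "(\<lambda>_. 1) \<in> Wsp q lam 0"
  shows "tensor (insert x A) (Fj(x := \<lambda>_. 1)) \<in> fundamental q lam m c (insert x A)"
  unfolding fundamental_def tensor_def
proof (intro CollectI exI conjI)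
  show "\<forall>j\<in>insert x A. (ix(x := 0)) j \<le> m \<and> (Fj(x := \<lambda>_. 1)) j \<in> Wsp q lam ((ix(x := 0)) j)"
    using ix W0 by auto
  show "\<forall>i\<le>m. card {j\<in>insert x A. (ix(x := 0)) j = i} = c i"
  proof (intro allI impI)
    fix i assume "i \<le> m"
    have "{j\<in>insert x A. (ix(x := 0)) j = i} = (if i = 0 then insert x {j\<in>A. ix j = 0} else {j\<in>A. ix j = i})"
      using A(2) by auto
    then show "card {j\<in>insert x A. (ix(x := 0)) j = i} = c i"
      using count \<open>i \<le> m\<close> c0 A by (simp add: type_prime_def)
  qed
qed (rule refl)

lemma Dstar_Pkc:
  assumes W0: "(\<lambda>_. 1) \<in> Wsp q lam 0"
    and G: "G \<in> Pkc n q lam m s (type_prime c)" and c0: "c 0 > 0"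
  shows "Dstar n (Suc s) G \<in> Pkc n q lam m (Suc s) c"
  using G unfolding Pkc_def
proof (rule lin_span_image[rotated 2])
  fix g assume "g \<in> (\<Union>A\<in>{A. A \<subseteq> {1..n} \<and> card A = s}. fundamental q lam m (type_prime c) A)"
  then obtain A where A: "A \<subseteq> {1..n}" "card A = s" and g: "g \<in> fundamental q lam m (type_prime c) A"
    by blast
  obtain ix Fj where ix: "\<forall>j\<in>A. ix j \<le> m \<and> Fj j \<in> Wsp q lam (ix j)"
    and count: "\<forall>i\<le>m. card {j\<in>A. ix j = i} = type_prime c i" and g_eq: "g = tensor A Fj"
    using g by (rule fundamentalE)
  have finA: "finite A"
    using A(1) by (rule finite_subset) simp
  have "tensor (insert x A) (Fj(x := \<lambda>_. 1))
      \<in> lin_span (\<Union>A\<in>{A. A \<subseteq> {1..n} \<and> card A = Suc s}. fundamental q lam m c A)"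
    if "x \<in> {1..n} - A" for x
    using that A finA fundamental_insert[OF ix count c0 finA _ W0]
    by (intro lin_span_base UN_I[of "insert x A"]) auto
  then have "(\<lambda>\<theta>. \<Sum>x\<in>{1..n} - A. 1 * tensor (insert x A) (Fj(x := \<lambda>_. 1)) \<theta>)
      \<in> lin_span (\<Union>A\<in>{A. A \<subseteq> {1..n} \<and> card A = Suc s}. fundamental q lam m c A)"
    by (intro lin_span_sum) auto
  moreover have "Dstar n (Suc s) g = (\<lambda>\<theta>. \<Sum>x\<in>{1..n} - A. tensor (insert x A) (Fj(x := \<lambda>_. 1)) \<theta>)"
    unfolding g_eq by (rule ext) (rule Dstar_tensor[OF A])
  ultimately show "Dstar n (Suc s) g \<in> lin_span (\<Union>A\<in>{A. A \<subseteq> {1..n} \<and> card A = Suc s}. fundamental q lam m c A)"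
    by simp
qed (rule Dstar_lincomb)

lemma Pdiff_subset_Pkc:
  assumes W0: "(\<lambda>_. 1) \<in> Wsp q lam 0"
  shows "Pdiff n q lam m k d c \<subseteq> Pkc n q lam m (k + d) c"
proof (induction d arbitrary: c)
  case 0
  show ?case
    by auto
next
  case (Suc d)
  show ?case
  proof (cases "c 0 = 0")
    case True
    then show ?thesis
      using lin_span_0 by (auto simp: Pkc_def Dstar_0)
  next
    case False
    then show ?thesis
      using Suc.IH[of "type_prime c"] Dstar_Pkc[OF W0, of _ n m "k + d" c] by auto
  qed
qed

lemma relocate_sum_Pkc:
  fixes q :: "'y::finite \<Rightarrow> 'y \<Rightarrow> real"
  assumes q: "stochastic_sym_irred q" and lam0: "lam 0 = 1" and inj: "inj_on lam {0..m}"
    and F: "F \<in> Pkc n q lam m t c" and \<theta>: "\<theta> \<in> Theta n t"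
  shows "relocate_sum n F \<theta> = Dstar n t (Dop n t F) \<theta> - real CARD('y) * real (c 0) * F \<theta>"
proof -
  have "markov_sum (\<lambda>_ _. 1) F \<theta>
      = (\<Sum>i\<le>m. real (c i) * (if i = 0 then real CARD('y) else 0)) * F \<theta>"
    using F by (rule markov_sum_Pkc) (rule Qop_all_ones_Wsp[OF q lam0 inj])
  also have "(\<Sum>i\<le>m. real (c i) * (if i = 0 then real CARD('y) else 0)) = real CARD('y) * real (c 0)"
    by (subst sum.remove[of _ 0]) auto
  finally show ?thesis
    using Dstar_Dop_eq[OF \<theta>, of F] by simp
qed

lemma relocate_sum_Pdiff:
  fixes q :: "'y::finite \<Rightarrow> 'y \<Rightarrow> real"
  assumes q: "stochastic_sym_irred q" and lam0: "lam 0 = 1" and inj: "inj_on lam {0..m}"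
  shows "F \<in> Pdiff n q lam m k d c \<Longrightarrow> k + d \<le> n \<Longrightarrow> \<theta> \<in> Theta n (k + d) \<Longrightarrow>
    relocate_sum n F \<theta> = real CARD('y) * (real d * (real n - real k + 1 - real (c 0)) - real (c 0)) * F \<theta>"
proof (induction d arbitrary: c F \<theta>)
  case 0
  then have "F \<in> Pkc n q lam m k c" "Dop n k F = (\<lambda>_. 0)"
    by auto
  then show ?case
    using relocate_sum_Pkc[OF q lam0 inj] 0 by (simp add: Dstar_0)
next
  case (Suc d)
  have W0: "(\<lambda>_. 1) \<in> Wsp q lam 0"
    using q lam0 by (rule const_in_Wsp_0)
  show ?case
  proof (cases "c 0 = 0")
    case True
    then show ?thesis
      using Suc.prems(1) by (simp add: Dstar_0 relocate_sum_def)
  next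
    case False
    obtain G where G: "G \<in> Pdiff n q lam m k d (type_prime c)" and F: "F = Dstar n (Suc (k + d)) G"
      using Suc.prems(1) False by auto
    define e where "e = real d * (real n - real k + 1 - real (type_prime c 0)) - real (type_prime c 0)"
    have "Dop n (Suc (k + d)) F \<phi> = real CARD('y) * (real (n - (k + d)) + e) * G \<phi>" if "\<phi> \<in> Theta n (k + d)" for \<phi>
      using Dop_Dstar_eq[OF that, of G] Suc.IH[OF G _ that] Suc.prems(2)
      unfolding F e_def by (simp add: algebra_simps)
    then have "Dstar n (Suc (k + d)) (Dop n (Suc (k + d)) F) \<theta> = real CARD('y) * (real (n - (k + d)) + e) * F \<theta>"
      unfolding F by (intro Dstar_Suc_scale) blast
    moreover have "F \<in> Pkc n q lam m (Suc (k + d)) c"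
      using subsetD[OF Pdiff_subset_Pkc[OF W0] Suc.prems(1)] by simp
    ultimately have "relocate_sum n F \<theta> = real CARD('y) * (real (n - (k + d)) + e - real (c 0)) * F \<theta>"
      using relocate_sum_Pkc[OF q lam0 inj, of F n "Suc (k + d)" c \<theta>] Suc.prems(3)
      by (simp add: algebra_simps)
    moreover have "real (type_prime c 0) = real (c 0) - 1"
      using False by (simp add: type_prime_def of_nat_diff)
    ultimately show ?thesis
      using Suc.prems(2) unfolding e_def by (simp add: of_nat_diff algebra_simps)
  qed
qed

lemma type_size_eq: "type_size m c = c 0 + type_ell m c"
proof -
  have "{..m} = insert 0 {1..m}"
    by auto
  then show ?thesis
    unfolding type_size_def type_ell_def by simp
qed

lemma Deltaop_Phck:
  fixes q :: "'y::finite \<Rightarrow> 'y \<Rightarrow> real"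
  assumes q: "stochastic_sym_irred q" and lam0: "lam 0 = 1" and inj: "inj_on lam {0..m}"
    and h: "1 \<le> h" "h \<le> n" and k: "k \<le> h" and size: "type_size m a = h"
    and F: "F \<in> Phck n q lam m h a k" and \<theta>: "\<theta> \<in> Theta n h"
  shows "Deltaop n h F \<theta> = real CARD('y) *
    ((real n + real (type_ell m a) - real k - real h) * (real h - real k + 1) - (real n - real h)) * F \<theta>"
proof -
  have "relocate_sum n F \<theta> = real CARD('y) * (real (h - k) * (real n - real k + 1 - real (a 0)) - real (a 0)) * F \<theta>"
    using relocate_sum_Pdiff[OF q lam0 inj, of F n k "h - k" a \<theta>] F \<theta> h k by (simp add: Phck_def)
  moreover have "real (a 0) = real h - real (type_ell m a)"
    using size type_size_eq[of m a] by simp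
  ultimately show ?thesis
    using Deltaop_eq_relocate_sum[OF \<theta> h(1)] k by (simp add: of_nat_diff algebra_simps)
qed

lemma Mop_Phck:
  fixes q :: "'y::finite \<Rightarrow> 'y \<Rightarrow> real"
  assumes q: "stochastic_sym_irred q" and lam0: "lam 0 = 1" and k: "k \<le> h"
    and F: "F \<in> Phck n q lam m h a k" and \<theta>: "\<theta> \<in> Theta n h"
  shows "Mop n h q F \<theta> = (\<Sum>j\<le>m. real (a j) * lam j) / real h * F \<theta>"
proof -
  have "F \<in> Pkc n q lam m (k + (h - k)) a"
    using F unfolding Phck_def by (rule subsetD[OF Pdiff_subset_Pkc[OF const_in_Wsp_0[of q lam, OF q lam0]]])
  then have "F \<in> Pkc n q lam m h a"
    using k by simp
  then have "markov_sum q F \<theta> = (\<Sum>j\<le>m. real (a j) * lam j) * F \<theta>"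
    by (rule markov_sum_Pkc) (simp add: Wsp_def)
  then show ?thesis
    using \<theta> by (simp add: Mop_def markov_sum_def)
qed

theorem theorem7p14:
  fixes n h k m :: nat and q :: "'y::finite \<Rightarrow> 'y \<Rightarrow> real" and lam :: "nat \<Rightarrow> real"
    and p0 :: real and a :: "nat \<Rightarrow> nat" and F :: "(nat \<Rightarrow> 'y option) \<Rightarrow> real"
  assumes "n \<ge> 2"
    and "stochastic_sym_irred q"
    and "lam 0 = 1" and "inj_on lam {0..m}"
    and "{\<mu>. \<exists>f. f \<noteq> (\<lambda>_. 0) \<and> Qop q f = (\<lambda>y. \<mu> * f y)} = lam ` {0..m}"
    and "1 \<le> h" and "h \<le> n - 1"
    and "0 < p0" and "p0 < 1"
    and "type_size m a = h"
    and "type_ell m a \<le> k" and "k \<le> h"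
    and "F \<in> Phck n q lam m h a k"
  shows "\<forall>\<theta>\<in>Theta n h. Pop n h p0 q F \<theta> =
     (p0 * (1 / real h) * (\<Sum>j\<le>m. real (a j) * lam j)
      + (1 - p0) * (((real n + real (type_ell m a) - real k - real h) * (real h - real k + 1)
                      - (real n - real h)) / (real h * (real n - real h)))) * F \<theta>"
proof
  fix \<theta> :: "nat \<Rightarrow> 'y option"
  assume \<theta>: "\<theta> \<in> Theta n h"
  have M: "Mop n h q F \<theta> = (\<Sum>j\<le>m. real (a j) * lam j) / real h * F \<theta>"
    using assms(2,3,12,13) \<theta> by (rule Mop_Phck)
  have "h \<le> n"
    using assms(7) by simp
  with assms(2,3,4,6) have \<Delta>: "Deltaop n h F \<theta> = real CARD('y) *
      ((real n + real (type_ell m a) - real k - real h) * (real h - real k + 1) - (real n - real h)) * F \<theta>"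
    using assms(12,10,13) \<theta> by (rule Deltaop_Phck)
  have "real h > 0" "real n - real h > 0" "real (n - h) = real n - real h"
    using assms(6,7) by auto
  then show "Pop n h p0 q F \<theta> =
     (p0 * (1 / real h) * (\<Sum>j\<le>m. real (a j) * lam j)
      + (1 - p0) * (((real n + real (type_ell m a) - real k - real h) * (real h - real k + 1)
                      - (real n - real h)) / (real h * (real n - real h)))) * F \<theta>"
    unfolding Pop_def M \<Delta> by (simp add: field_simps)
qed

end
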